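(* Let $G$ be a connected graph containing $t'$ pairwise vertex-disjoint triangles. Then $rc(L(G))\leq n_2-t'$, where $n_2$ is the number of vertices of $G$ of degree at least $2$. Moreover, the bound is sharp: for every positive integer $t'$ there exists a connected graph $G$ with $t'$ pairwise vertex-disjoint triangles such that $rc(L(G))=n_2-t'$.
   Context: All graphs are simple, finite and undirected. $L(G)$ is the line graph of $G$. For an edge-colouring of a graph (adjacent edges may receive the same colour), a path is rainbow if no two of its edges have the same colour; the graph is rainbow connected if every two vertices are joined by a rainbow path. The rainbow connection number $rc(H)$ of a connected graph $H$ is the smallest number of colours in an edge-colouring making $H$ rainbow connected. *)

theory Defs
  imports Main
begin

definition simple_graph :: "'v set \<Rightarrow> 'v set set \<Rightarrow> bool" where
  "simple_graph V E \<longleftrightarrow> finite V \<and> (\<forall>e\<in>E. e \<subseteq> V \<and> card e = 2)"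

definition path_edges :: "'v list \<Rightarrow> 'v set list" where
  "path_edges xs = map (\<lambda>i. {xs ! i, xs ! Suc i}) [0..<length xs - 1]"

definition is_path :: "'v set \<Rightarrow> 'v set set \<Rightarrow> 'v list \<Rightarrow> 'v \<Rightarrow> 'v \<Rightarrow> bool" where
  "is_path V E xs u v \<longleftrightarrow> xs \<noteq> [] \<and> hd xs = u \<and> last xs = v \<and> distinct xs
     \<and> set xs \<subseteq> V \<and> set (path_edges xs) \<subseteq> E"

definition connected_graph :: "'v set \<Rightarrow> 'v set set \<Rightarrow> bool" where
  "connected_graph V E \<longleftrightarrow> V \<noteq> {} \<and> (\<forall>u\<in>V. \<forall>v\<in>V. \<exists>xs. is_path V E xs u v)"

definition degree :: "'v set set \<Rightarrow> 'v \<Rightarrow> nat" where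
  "degree E v = card {e\<in>E. v \<in> e}"

definition n2 :: "'v set \<Rightarrow> 'v set set \<Rightarrow> nat" where
  "n2 V E = card {v\<in>V. degree E v \<ge> 2}"

definition line_graph_edges :: "'v set set \<Rightarrow> 'v set set set" where
  "line_graph_edges E = {{e, f} | e f. e \<in> E \<and> f \<in> E \<and> e \<noteq> f \<and> e \<inter> f \<noteq> {}}"

definition rainbow_path :: "'v set \<Rightarrow> 'v set set \<Rightarrow> ('v set \<Rightarrow> nat) \<Rightarrow> 'v list \<Rightarrow> 'v \<Rightarrow> 'v \<Rightarrow> bool" where
  "rainbow_path V E c xs u v \<longleftrightarrow> is_path V E xs u v \<and> distinct (map c (path_edges xs))"

definition rainbow_connected :: "'v set \<Rightarrow> 'v set set \<Rightarrow> ('v set \<Rightarrow> nat) \<Rightarrow> bool" where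
  "rainbow_connected V E c \<longleftrightarrow> (\<forall>u\<in>V. \<forall>v\<in>V. \<exists>xs. rainbow_path V E c xs u v)"

definition rc :: "'v set \<Rightarrow> 'v set set \<Rightarrow> nat" where
  "rc V E = (LEAST k. \<exists>c. (\<forall>e\<in>E. c e < k) \<and> rainbow_connected V E c)"

definition triangle :: "'v set set \<Rightarrow> 'v set \<Rightarrow> bool" where
  "triangle E T \<longleftrightarrow> card T = 3 \<and> (\<forall>x\<in>T. \<forall>y\<in>T. x \<noteq> y \<longrightarrow> {x, y} \<in> E)"

definition disjoint_triangles :: "'v set \<Rightarrow> 'v set set \<Rightarrow> 'v set set \<Rightarrow> nat \<Rightarrow> bool" where
  "disjoint_triangles V E Ts t \<longleftrightarrow> card Ts = t \<and> (\<forall>T\<in>Ts. T \<subseteq> V \<and> triangle E T)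
     \<and> (\<forall>T\<in>Ts. \<forall>T'\<in>Ts. T \<noteq> T' \<longrightarrow> T \<inter> T' = {})"

end

theory Submission
  imports Defs
begin

text \<open>Colour an edge \<open>{g, h}\<close> of \<open>L(G)\<close> by the vertex \<open>v\<close> shared by \<open>g\<close> and \<open>h\<close>, except that
  each of the \<open>t\<close> triangles gets only two colours for its three vertices: fixing a cyclic
  orientation \<open>s\<close> of the triangle, a line edge at a triangle vertex \<open>v\<close> is coloured by the
  triangle together with the bit "\<open>{v, s v}\<close> is one of its ends". This uses \<open>n\<^sub>2 - t\<close>
  colours. For disjoint edges \<open>e, f\<close> of \<open>G\<close>, lift a shortest path from \<open>e\<close> to \<open>f\<close> to \<open>L(G)\<close>.
  Two of its vertices in a common triangle are adjacent in \<open>G\<close>, hence consecutive on the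
  shortest path, and then exactly one of them is left or entered along its forward edge, so
  the bits differ; the only exception occurs at the ends of the path and disappears after
  moving the end vertex within its triangle. Hence the lift is rainbow.

  For sharpness, string \<open>t\<close> triangles along a path: \<open>n\<^sub>2 = 3t\<close>, and the two end edges are
  at distance \<open>2t\<close> in \<open>L(G)\<close>.\<close>

section \<open>Paths and shortest joins\<close>

definition graph_path :: "'v set set \<Rightarrow> 'v list \<Rightarrow> bool" where
  "graph_path E xs \<longleftrightarrow> xs \<noteq> [] \<and> distinct xs \<and> (\<forall>i. Suc i < length xs \<longrightarrow> {xs!i, xs!Suc i} \<in> E)"

lemma set_path_edges: "set (path_edges xs) = {{xs!i, xs!Suc i} | i. Suc i < length xs}"
  unfolding path_edges_def by (auto simp: image_iff)

lemma length_path_edges: "length (path_edges xs) = length xs - 1"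
  by (simp add: path_edges_def)

lemma is_path_iff_graph_path:
  "is_path V E xs u v \<longleftrightarrow> graph_path E xs \<and> hd xs = u \<and> last xs = v \<and> set xs \<subseteq> V"
  unfolding is_path_def graph_path_def set_path_edges by auto

lemma graph_path_singleton: "graph_path E [x]"
  by (simp add: graph_path_def)

lemma graph_path_take: "graph_path E xs \<Longrightarrow> 0 < j \<Longrightarrow> graph_path E (take j xs)"
  unfolding graph_path_def by (auto simp: distinct_take)

lemma graph_path_drop: "graph_path E xs \<Longrightarrow> j < length xs \<Longrightarrow> graph_path E (drop j xs)"
  unfolding graph_path_def by (auto simp: distinct_drop)

lemma graph_path_append:
  assumes "graph_path E xs" "graph_path E ys" "set xs \<inter> set ys = {}" "{last xs, hd ys} \<in> E"
  shows "graph_path E (xs @ ys)"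
  unfolding graph_path_def
proof (intro conjI allI impI)
  show "xs @ ys \<noteq> []" "distinct (xs @ ys)" using assms by (simp_all add: graph_path_def)
  have ne: "xs \<noteq> []" "ys \<noteq> []" using assms(1,2) by (simp_all add: graph_path_def)
  fix i assume i: "Suc i < length (xs @ ys)"
  consider "Suc i < length xs" | "Suc i = length xs" | "length xs \<le> i" by linarith
  then show "{(xs @ ys) ! i, (xs @ ys) ! Suc i} \<in> E"
  proof cases
    case 1
    then show ?thesis using assms(1) by (simp add: graph_path_def nth_append)
  next
    case 2
    then have "i = length xs - 1" by simp
    then have "(xs @ ys) ! i = last xs" "(xs @ ys) ! Suc i = hd ys"
      using ne 2 by (simp_all add: last_conv_nth hd_conv_nth nth_append)
    then show ?thesis using assms(4) by simp
  next
    case 3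
    then have "Suc (i - length xs) < length ys" using i by simp
    then show ?thesis using assms(2) 3 by (simp add: graph_path_def nth_append Suc_diff_le)
  qed
qed

lemma graph_path_shortcut:
  assumes "graph_path E xs" "i < j" "j < length xs" "{xs!i, xs!j} \<in> E"
  shows "graph_path E (take (Suc i) xs @ drop j xs)"
proof (rule graph_path_append)
  show "graph_path E (take (Suc i) xs)" "graph_path E (drop j xs)"
    using graph_path_take graph_path_drop assms(1,3) by auto
  show "set (take (Suc i) xs) \<inter> set (drop j xs) = {}"
    using assms(1,2) by (intro set_take_disj_set_drop_if_distinct) (auto simp: graph_path_def)
  have "last (take (Suc i) xs) = xs!i"
    using assms(2,3) by (simp add: take_Suc_conv_app_nth)
  then show "{last (take (Suc i) xs), hd (drop j xs)} \<in> E"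
    using assms(3,4) by (simp add: hd_drop_conv_nth)
qed

lemma graph_path_rev:
  assumes "graph_path E xs" shows "graph_path E (rev xs)"
  unfolding graph_path_def
proof (intro conjI allI impI)
  show "rev xs \<noteq> []" "distinct (rev xs)" using assms by (simp_all add: graph_path_def)
  fix i assume i: "Suc i < length (rev xs)"
  define k where "k = length xs - Suc (Suc i)"
  have k: "Suc k < length xs" "length xs - Suc i = Suc k" using i unfolding k_def by auto
  have "{xs!k, xs!Suc k} \<in> E" using assms k(1) by (simp add: graph_path_def)
  then show "{rev xs ! i, rev xs ! Suc i} \<in> E"
    using i k by (simp add: rev_nth k_def insert_commute)
qed

lemma is_path_rev: "is_path V E xs u v \<Longrightarrow> is_path V E (rev xs) v u"
  unfolding is_path_iff_graph_path
  by (metis graph_path_rev graph_path_def hd_rev last_rev set_rev)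

lemma connected_graph_path:
  assumes "connected_graph V E" "a \<in> V" "b \<in> V"
  obtains xs where "graph_path E xs" "hd xs = a" "last xs = b"
  using assms unfolding connected_graph_def is_path_iff_graph_path by blast

definition joins :: "'v set set \<Rightarrow> 'v set \<Rightarrow> 'v set \<Rightarrow> 'v list \<Rightarrow> bool" where
  "joins E e f xs \<longleftrightarrow> graph_path E xs \<and> hd xs \<in> e \<and> last xs \<in> f"

definition shortest_join :: "'v set set \<Rightarrow> 'v set \<Rightarrow> 'v set \<Rightarrow> 'v list \<Rightarrow> bool" where
  "shortest_join E e f xs \<longleftrightarrow> joins E e f xs \<and> (\<forall>ys. joins E e f ys \<longrightarrow> length xs \<le> length ys)"

lemma joins_rev: "joins E e f xs \<Longrightarrow> joins E f e (rev xs)"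
  unfolding joins_def by (metis graph_path_rev graph_path_def hd_rev last_rev)

lemma shortest_join_rev: "shortest_join E e f xs \<Longrightarrow> shortest_join E f e (rev xs)"
  unfolding shortest_join_def by (metis joins_rev length_rev rev_rev_ident)

lemma shortest_join_same_length:
  "shortest_join E e f xs \<Longrightarrow> joins E e f ys \<Longrightarrow> length ys = length xs \<Longrightarrow> shortest_join E e f ys"
  unfolding shortest_join_def by simp

lemma shortest_join_exists:
  assumes "connected_graph V E" "a \<in> V" "a \<in> e" "b \<in> V" "b \<in> f"
  shows "\<exists>xs. shortest_join E e f xs"
proof -
  obtain xs where "joins E e f xs"
    using connected_graph_path[OF assms(1,2,4)] assms(3,5) unfolding joins_def by metis
  then show ?thesis
    using ex_has_least_nat[of "joins E e f" xs length] unfolding shortest_join_def by blast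
qed

locale edge_join =
  fixes E :: "'v set set" and e f :: "'v set" and xs :: "'v list"
  assumes start_edge: "e \<in> E" and end_edge: "f \<in> E" and disjoint_ends: "e \<inter> f = {}"
    and shortest: "shortest_join E e f xs"
begin

lemma path: "graph_path E xs" and hd_in_start: "hd xs \<in> e" and last_in_end: "last xs \<in> f"
  using shortest by (auto simp: shortest_join_def joins_def)

lemma length_le_join: "joins E e f ys \<Longrightarrow> length xs \<le> length ys"
  using shortest by (simp add: shortest_join_def)

lemma nonempty: "xs \<noteq> []"
  using path by (simp add: graph_path_def)

lemma nth_eq_iff: "i < length xs \<Longrightarrow> j < length xs \<Longrightarrow> xs!i = xs!j \<longleftrightarrow> i = j"
  using path by (simp add: graph_path_def nth_eq_iff_index_eq)

lemma first_in_start: "xs!0 \<in> e"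
  using hd_in_start nonempty by (simp add: hd_conv_nth)

lemma final_in_end: "xs!(length xs - 1) \<in> f"
  using last_in_end nonempty by (simp add: last_conv_nth)

lemma length_ge_2: "2 \<le> length xs"
proof (rule ccontr)
  assume "\<not> 2 \<le> length xs"
  moreover have "0 < length xs" using nonempty by simp
  ultimately have "length xs = 1" by linarith
  then show False using first_in_start final_in_end disjoint_ends by auto
qed

lemma no_chord:
  assumes "i < j" "j < length xs" "{xs!i, xs!j} \<in> E" shows "j = Suc i"
proof -
  let ?ys = "take (Suc i) xs @ drop j xs"
  have "joins E e f ?ys"
    using graph_path_shortcut[OF path assms] hd_in_start last_in_end nonempty assms(1,2)
    by (cases xs) (auto simp: joins_def)
  then show ?thesis using length_le_join[of ?ys] assms(1,2) by simp
qed

lemma start_only_at_first: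
  assumes "0 < j" "j < length xs" shows "xs!j \<notin> e"
proof
  assume "xs!j \<in> e"
  then have "joins E e f (drop j xs)"
    using graph_path_drop[OF path assms(2)] last_in_end assms(2)
    by (simp add: joins_def hd_drop_conv_nth)
  then show False using length_le_join assms by fastforce
qed

lemma end_only_at_last:
  assumes "Suc j < length xs" shows "xs!j \<notin> f"
proof
  assume "xs!j \<in> f"
  moreover have "last (take (Suc j) xs) = xs!j"
    using assms by (simp add: take_Suc_conv_app_nth)
  ultimately have "joins E e f (take (Suc j) xs)"
    using graph_path_take[OF path, of "Suc j"] hd_in_start assms by (simp add: joins_def)
  then show False using length_le_join assms by fastforce
qed

definition link :: "nat \<Rightarrow> 'v set" where
  "link i = (if i = 0 then e else if i = length xs then f else {xs!(i-1), xs!i})"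

lemma link_in_edges:
  assumes "i \<le> length xs" shows "link i \<in> E"
proof -
  consider "i = 0" | "i = length xs" | "0 < i" "i < length xs" using assms by linarith
  then show ?thesis
  proof cases
    case 3
    then have "Suc (i-1) < length xs" by simp
    then have "{xs!(i-1), xs!Suc (i-1)} \<in> E" using path unfolding graph_path_def by blast
    then show ?thesis using 3 by (simp add: link_def)
  qed (use start_edge end_edge nonempty in \<open>simp_all add: link_def\<close>)
qed

lemma nth_in_links:
  assumes "j < length xs" shows "xs!j \<in> link j" "xs!j \<in> link (Suc j)"
proof -
  show "xs!j \<in> link j" using assms first_in_start by (simp add: link_def)
  show "xs!j \<in> link (Suc j)"
  proof (cases "Suc j = length xs")
    case True
    then have "j = length xs - 1" by simp
    then show ?thesis using final_in_end True nonempty by (simp add: link_def)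
  qed (use assms in \<open>simp add: link_def\<close>)
qed

lemma link_neq:
  assumes "i < i'" "i' \<le> length xs" shows "link i \<noteq> link i'"
proof
  assume eq: "link i = link i'"
  show False
  proof (cases "i = 0")
    case True
    show False
    proof (cases "i' = length xs")
      case True
      then show False using eq \<open>i = 0\<close> disjoint_ends first_in_start nonempty by (auto simp: link_def)
    next
      case False
      then have "xs!i' \<in> e" using eq \<open>i = 0\<close> nth_in_links(1)[of i'] assms by (simp add: link_def)
      then show False using start_only_at_first False assms by simp
    qed
  next
    case False
    then have x: "xs!(i-1) \<in> link i'" using eq nth_in_links(2)[of "i-1"] assms by simp
    show False
    proof (cases "i' = length xs")
      case True
      then show False using x end_only_at_last[of "i-1"] False assms nonempty by (simp add: link_def)
    next
      case i': False
      then have "xs!(i-1) = xs!(i'-1) \<or> xs!(i-1) = xs!i'"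
        using x \<open>i \<noteq> 0\<close> assms by (simp add: link_def)
      then show False using nth_eq_iff[of "i-1" "i'-1"] nth_eq_iff[of "i-1" i'] False i' assms
        by auto
    qed
  qed
qed

definition line_path :: "'v set list" where
  "line_path = map link [0..<Suc (length xs)]"

lemma length_line_path: "length line_path = Suc (length xs)"
  by (simp add: line_path_def)

lemma nth_line_path: "i \<le> length xs \<Longrightarrow> line_path ! i = link i"
  unfolding line_path_def by (simp only: length_upt nth_map nth_upt) simp_all

lemma path_edges_line_path:
  "path_edges line_path = map (\<lambda>j. {link j, link (Suc j)}) [0..<length xs]"
  unfolding path_edges_def length_line_path by (rule map_cong) (simp_all add: nth_line_path)

lemma is_path_line_path: "is_path E (line_graph_edges E) line_path e f"
  unfolding is_path_iff_graph_path graph_path_def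
proof (intro conjI allI impI)
  show ne: "line_path \<noteq> []" using length_line_path by auto
  have "inj_on link {0..<Suc (length xs)}"
    by (rule linorder_inj_onI') (simp add: link_neq less_Suc_eq_le)
  then show "distinct line_path" unfolding line_path_def by (simp only: distinct_map distinct_upt set_upt)
  show "hd line_path = e" using nth_line_path[of 0] by (simp add: hd_conv_nth[OF ne] link_def)
  show "last line_path = f" using nth_line_path[of "length xs"] length_line_path nonempty
    by (simp add: last_conv_nth[OF ne] link_def)
  show "set line_path \<subseteq> E" using link_in_edges by (auto simp: line_path_def)
  fix i assume "Suc i < length line_path"
  then have i: "i < length xs" using length_line_path by simp
  have "{line_path ! i, line_path ! Suc i} = {link i, link (Suc i)}" using nth_line_path i by simp
  moreover have "link i \<in> E" "link (Suc i) \<in> E" using link_in_edges i by simp_all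
  moreover have "link i \<noteq> link (Suc i)" using link_neq i by simp
  moreover have "link i \<inter> link (Suc i) \<noteq> {}" using nth_in_links[OF i] by blast
  ultimately show "{line_path ! i, line_path ! Suc i} \<in> line_graph_edges E"
    unfolding line_graph_edges_def by blast
qed

end

section \<open>The colouring\<close>

definition common_vertex :: "'v set set \<Rightarrow> 'v" where
  "common_vertex \<epsilon> = (THE v. \<forall>g\<in>\<epsilon>. v \<in> g)"

lemma common_vertex_eq:
  assumes "card g = 2" "card h = 2" "g \<noteq> h" "v \<in> g" "v \<in> h"
  shows "common_vertex {g, h} = v"
  unfolding common_vertex_def
proof (rule the_equality)
  show "\<forall>x\<in>{g, h}. v \<in> x" using assms by simp
  fix w assume w: "\<forall>x\<in>{g, h}. w \<in> x"
  show "w = v"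
  proof (rule ccontr)
    assume "w \<noteq> v"
    then have "card {v, w} = 2" by simp
    moreover have "{v, w} \<subseteq> g" "{v, w} \<subseteq> h" using assms(4,5) w by auto
    ultimately have "g = {v, w}" "h = {v, w}"
      using assms(1,2) by (metis card_subset_eq card.infinite zero_neq_numeral)+
    then show False using assms(3) by simp
  qed
qed

lemma degree_ge_2I:
  assumes "finite E" "g \<in> E" "h \<in> E" "g \<noteq> h" "v \<in> g" "v \<in> h"
  shows "2 \<le> degree E v"
proof -
  have "{g, h} \<subseteq> {x \<in> E. v \<in> x}" using assms by auto
  then have "card {g, h} \<le> degree E v" unfolding degree_def using assms(1) by (simp add: card_mono)
  then show ?thesis using assms(4) by simp
qed

lemma triangle_orientation_exists:
  assumes "disjoint_triangles V E Ts t"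
  obtains s where "\<And>T v. T \<in> Ts \<Longrightarrow> v \<in> T \<Longrightarrow> s v \<in> T \<and> s v \<noteq> v \<and> s (s v) \<noteq> v"
proof -
  have "\<forall>T\<in>Ts. \<exists>r. \<forall>v\<in>T. r v \<in> T \<and> r v \<noteq> v \<and> r (r v) \<noteq> v"
  proof
    fix T assume "T \<in> Ts"
    have "card T = 3" using assms \<open>T \<in> Ts\<close> unfolding disjoint_triangles_def triangle_def by blast
    then obtain a b c where "T = {a, b, c}" "a \<noteq> b" "b \<noteq> c" "a \<noteq> c" by (metis card_3_iff)
    then show "\<exists>r. \<forall>v\<in>T. r v \<in> T \<and> r v \<noteq> v \<and> r (r v) \<noteq> v"
      by (intro exI[of _ "\<lambda>x. if x = a then b else if x = b then c else a"]) auto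
  qed
  then obtain r where r: "\<forall>T\<in>Ts. \<forall>v\<in>T. r T v \<in> T \<and> r T v \<noteq> v \<and> r T (r T v) \<noteq> v"
    by (rule bchoice[THEN exE]) blast
  have unique: "T' = T" if "T \<in> Ts" "T' \<in> Ts" "v \<in> T" "v \<in> T'" for T T' v
    using assms that unfolding disjoint_triangles_def by blast
  define s where "s v = r (THE T. T \<in> Ts \<and> v \<in> T) v" for v
  have s: "s v = r T v" if "T \<in> Ts" "v \<in> T" for T v
  proof -
    have "(THE T. T \<in> Ts \<and> v \<in> T) = T"
      by (rule the_equality) (use unique that in blast)+
    then show ?thesis by (simp add: s_def)
  qed
  show ?thesis
  proof (rule that)
    fix T v assume T: "T \<in> Ts" "v \<in> T"
    moreover have "r T v \<in> T" "r T v \<noteq> v" "r T (r T v) \<noteq> v" using r T by blast+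
    ultimately show "s v \<in> T \<and> s v \<noteq> v \<and> s (s v) \<noteq> v" using s[of T v] s[of T "r T v"] by simp
  qed
qed

text \<open>An orientation \<open>s\<close> rotating every triangle as a 3-cycle singles out, at each triangle
  vertex \<open>v\<close>, its forward edge \<open>{v, s v}\<close>.\<close>
locale oriented_triangles =
  fixes V :: "'v set" and E :: "'v set set" and Ts :: "'v set set" and t :: nat and s :: "'v \<Rightarrow> 'v"
  assumes simple: "simple_graph V E" and connected: "connected_graph V E"
    and triangles: "disjoint_triangles V E Ts t"
    and orient_in: "T \<in> Ts \<Longrightarrow> v \<in> T \<Longrightarrow> s v \<in> T"
    and orient_ne: "T \<in> Ts \<Longrightarrow> v \<in> T \<Longrightarrow> s v \<noteq> v"
    and orient_orient_ne: "T \<in> Ts \<Longrightarrow> v \<in> T \<Longrightarrow> s (s v) \<noteq> v"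
begin

lemma finite_vertices: "finite V"
  using simple by (simp add: simple_graph_def)

lemma edge_subset: "g \<in> E \<Longrightarrow> g \<subseteq> V" and edge_card: "g \<in> E \<Longrightarrow> card g = 2"
  using simple by (simp_all add: simple_graph_def)

lemma finite_edges: "finite E"
proof -
  have "E \<subseteq> Pow V" using edge_subset by blast
  then show ?thesis using finite_vertices by (simp add: finite_subset)
qed

lemma triangle_subset: "T \<in> Ts \<Longrightarrow> T \<subseteq> V"
  and card_triangle: "T \<in> Ts \<Longrightarrow> card T = 3"
  and triangle_edge: "T \<in> Ts \<Longrightarrow> v \<in> T \<Longrightarrow> w \<in> T \<Longrightarrow> v \<noteq> w \<Longrightarrow> {v, w} \<in> E"
  using triangles by (auto simp: disjoint_triangles_def triangle_def)

lemma triangles_disjoint: "T \<in> Ts \<Longrightarrow> T' \<in> Ts \<Longrightarrow> v \<in> T \<Longrightarrow> v \<in> T' \<Longrightarrow> T = T'"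
  using triangles unfolding disjoint_triangles_def by blast

lemma triangle_eq:
  assumes "T \<in> Ts" "v \<in> T" shows "T = {v, s v, s (s v)}"
proof -
  have "s (s v) \<noteq> s v" using orient_ne orient_in assms by blast
  then have "card {v, s v, s (s v)} = 3" using orient_ne[OF assms] orient_orient_ne[OF assms] by simp
  moreover have "{v, s v, s (s v)} \<subseteq> T" using orient_in assms by blast
  ultimately show ?thesis
    using card_triangle[OF assms(1)] by (metis card.infinite card_subset_eq zero_neq_numeral)
qed

lemma orient_cube: assumes "T \<in> Ts" "v \<in> T" shows "s (s (s v)) = v"
proof -
  have "s v \<in> T" "s (s v) \<in> T" using orient_in assms by blast+
  then show ?thesis
    using triangle_eq[OF assms] orient_in orient_ne orient_orient_ne assms(1) by blast
qed

lemma triangle_other: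
  assumes "T \<in> Ts" "v \<in> T" "w \<in> T" "w \<noteq> v" shows "w = s v \<or> v = s w"
proof -
  have "w = s v \<or> w = s (s v)" using triangle_eq[OF assms(1,2)] assms(3,4) by blast
  then show ?thesis using orient_cube[OF assms(1,2)] by auto
qed

definition triangle_vertices :: "'v set" where
  "triangle_vertices = \<Union>Ts"

definition triangle_of :: "'v \<Rightarrow> 'v set" where
  "triangle_of v = (THE T. T \<in> Ts \<and> v \<in> T)"

lemma triangle_of_eq: "T \<in> Ts \<Longrightarrow> v \<in> T \<Longrightarrow> triangle_of v = T"
  unfolding triangle_of_def by (rule the_equality) (use triangles_disjoint in blast)+

lemma triangle_of_mem:
  assumes "v \<in> triangle_vertices" shows "triangle_of v \<in> Ts" "v \<in> triangle_of v"
  using assms triangle_of_eq unfolding triangle_vertices_def by auto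

definition colour :: "'v set set \<Rightarrow> 'v + 'v set \<times> bool" where
  "colour \<epsilon> = (let v = common_vertex \<epsilon> in
     if v \<in> triangle_vertices then Inr (triangle_of v, {v, s v} \<in> \<epsilon>) else Inl v)"

definition colours :: "('v + 'v set \<times> bool) set" where
  "colours = ({v \<in> V. 2 \<le> degree E v} - triangle_vertices) <+> Ts \<times> (UNIV :: bool set)"

lemma triangle_vertices_degree: "triangle_vertices \<subseteq> {v \<in> V. 2 \<le> degree E v}"
proof
  fix v assume "v \<in> triangle_vertices"
  then obtain T where T: "T \<in> Ts" "v \<in> T" unfolding triangle_vertices_def by blast
  have sT: "s v \<in> T" "s (s v) \<in> T" using orient_in T by blast+
  have "s (s v) \<noteq> s v" using orient_ne[OF T(1) sT(1)] .
  then have "{v, s v} \<noteq> {v, s (s v)}" using orient_ne[OF T] by (auto simp: doubleton_eq_iff)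
  moreover have "{v, s v} \<in> E" "{v, s (s v)} \<in> E"
    using triangle_edge[OF T(1) T(2)] sT orient_ne[OF T] orient_orient_ne[OF T] by auto
  ultimately have "2 \<le> degree E v" using degree_ge_2I[OF finite_edges] by blast
  then show "v \<in> {v \<in> V. 2 \<le> degree E v}" using triangle_subset T by auto
qed

lemma card_triangle_vertices: "card triangle_vertices = 3 * t"
proof -
  have "card triangle_vertices = (\<Sum>T\<in>Ts. card T)" unfolding triangle_vertices_def
    using triangles card_triangle
    by (intro card_Union_disjoint)
       (auto simp: disjoint_triangles_def pairwise_def disjnt_def intro: card_ge_0_finite)
  then show ?thesis using card_triangle triangles by (simp add: disjoint_triangles_def)
qed

lemma finite_colours: "finite colours"
proof -
  have "Ts \<subseteq> Pow V" using triangle_subset by blast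
  then show ?thesis unfolding colours_def using finite_vertices by (simp add: finite_subset)
qed

text \<open>A triangle needs only two colours instead of one for each of its three vertices.\<close>
lemma card_colours: "card colours = n2 V E - t"
proof -
  have fin: "finite {v \<in> V. 2 \<le> degree E v}" "finite Ts"
    using finite_vertices finite_colours by (auto simp: colours_def finite_cartesian_product_iff)
  have "card colours = card {v \<in> V. 2 \<le> degree E v} - 3 * t + 2 * t"
    unfolding colours_def using fin triangle_vertices_degree triangles
    by (simp add: card_Plus card_Diff_subset card_triangle_vertices finite_subset
        card_cartesian_product disjoint_triangles_def)
  moreover have "3 * t \<le> card {v \<in> V. 2 \<le> degree E v}"
    using card_mono[OF fin(1) triangle_vertices_degree] card_triangle_vertices by simp
  ultimately show ?thesis unfolding n2_def by simp
qed

lemma colour_in_colours: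
  assumes "\<epsilon> \<in> line_graph_edges E" shows "colour \<epsilon> \<in> colours"
proof -
  obtain g h v where gh: "\<epsilon> = {g, h}" "g \<in> E" "h \<in> E" "g \<noteq> h" "v \<in> g" "v \<in> h"
    using assms unfolding line_graph_edges_def by blast
  then have "common_vertex \<epsilon> = v" using common_vertex_eq[OF edge_card edge_card] by simp
  moreover have "v \<in> {v \<in> V. 2 \<le> degree E v}"
    using degree_ge_2I[OF finite_edges gh(2-6)] edge_subset gh by auto
  ultimately show ?thesis using triangle_of_mem by (auto simp: colour_def colours_def)
qed

text \<open>The one configuration in which the first two edges of the lifted path get the same colour
  (for \<open>f\<close> and \<open>rev xs\<close> it describes the last two); moving the first vertex of the join
  to \<open>s (xs!0)\<close> avoids it.\<close>
definition twisted_start :: "'v set \<Rightarrow> 'v list \<Rightarrow> bool" where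
  "twisted_start e xs \<longleftrightarrow> xs!1 \<in> triangle_vertices \<and> xs!0 = s (xs!1) \<and> e = {xs!0, s (xs!0)}"

end

locale triangle_join = oriented_triangles V E Ts t s + edge_join E e f xs
  for V E Ts t s e f xs
begin

lemma untwist_start:
  "\<exists>ys. shortest_join E e f ys \<and> \<not> twisted_start e ys
     \<and> (\<not> twisted_start f (rev xs) \<longrightarrow> \<not> twisted_start f (rev ys))"
proof (cases "twisted_start e xs")
  case False
  then show ?thesis using shortest by blast
next
  case True
  obtain x0 x1 rest where xs: "xs = x0 # x1 # rest"
    using length_ge_2 by (cases xs; cases "tl xs") auto
  obtain T where T: "T \<in> Ts" "x1 \<in> T" and x0: "x0 = s x1" and e: "e = {x0, s x0}"
    using True unfolding twisted_start_def triangle_vertices_def xs by auto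
  define u where "u = s x0"
  have u: "u \<in> T" "u \<noteq> x1" "u \<noteq> x0" "u \<in> e"
    using orient_in orient_ne orient_orient_ne T unfolding u_def x0 e by auto
  have "u \<notin> set (x1 # rest)"
  proof
    assume "u \<in> set (x1 # rest)"
    then obtain j where "j < length (x1 # rest)" "(x1 # rest) ! j = u" by (metis in_set_conv_nth)
    then have "Suc j < length xs" "xs ! Suc j = u" using xs by auto
    then show False using start_only_at_first[of "Suc j"] u(4) xs by simp
  qed
  moreover have "graph_path E (x1 # rest)"
    using graph_path_drop[OF path, of 1] xs by simp
  ultimately have "graph_path E (u # x1 # rest)"
    using graph_path_append[OF graph_path_singleton, of E "x1 # rest" u]
      triangle_edge[OF T(1) u(1) T(2) u(2)] by simp
  then have "joins E e f (u # x1 # rest)"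
    using u(4) last_in_end xs by (simp add: joins_def)
  then have shortest_u: "shortest_join E e f (u # x1 # rest)"
    using shortest_join_same_length[OF shortest] xs by simp
  have "\<not> twisted_start e (u # x1 # rest)" using u(3) x0 by (simp add: twisted_start_def)
  moreover have "\<not> twisted_start f (rev (u # x1 # rest))" if "\<not> twisted_start f (rev xs)"
  proof (cases rest)
    case Nil
    then show ?thesis using disjoint_ends e x0 by (auto simp: twisted_start_def)
  next
    case (Cons r rs)
    then have "2 \<le> length (rev rest @ [x1])" by simp
    then obtain a b cs where "rev rest @ [x1] = a # b # cs"
      by (cases "rev rest @ [x1]"; cases "tl (rev rest @ [x1])") auto
    then show ?thesis using that xs by (simp add: twisted_start_def)
  qed
  ultimately show ?thesis using shortest_u by blast
qed

end

locale untwisted_join = triangle_join +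
  assumes untwisted_start: "\<not> twisted_start e xs"
    and untwisted_end: "\<not> twisted_start f (rev xs)"
begin

lemma colour_link:
  assumes "j < length xs"
  shows "colour {link j, link (Suc j)} = (if xs!j \<in> triangle_vertices
     then Inr (triangle_of (xs!j), {xs!j, s (xs!j)} \<in> {link j, link (Suc j)}) else Inl (xs!j))"
proof -
  have "common_vertex {link j, link (Suc j)} = xs!j"
    using common_vertex_eq[OF edge_card edge_card] link_in_edges link_neq nth_in_links assms
    by simp
  then show ?thesis by (simp add: colour_def Let_def)
qed

lemma link_Suc: "Suc j < length xs \<Longrightarrow> link (Suc j) = {xs!j, xs!Suc j}"
  by (simp add: link_def)

lemma forward_edge_not_before:
  assumes "Suc j < length xs" "T \<in> Ts" "xs!Suc j \<in> T" "xs!j = s (xs!Suc j)"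
  shows "link j \<noteq> {xs!j, s (xs!j)}"
proof
  assume eq: "link j = {xs!j, s (xs!j)}"
  show False
  proof (cases j)
    case 0
    have "xs!1 \<in> triangle_vertices" using assms(2,3) 0 unfolding triangle_vertices_def by auto
    moreover have "link 0 = e" by (simp add: link_def)
    ultimately have "twisted_start e xs" using eq assms(4) 0 by (simp add: twisted_start_def)
    then show False using untwisted_start by simp
  next
    case (Suc i)
    have "xs!i \<noteq> xs!j" using nth_eq_iff[of i j] assms(1) Suc by simp
    moreover have "link j = {xs!i, xs!j}" using link_Suc assms(1) Suc by simp
    ultimately have "xs!i = s (xs!j)" using eq by (auto simp: doubleton_eq_iff)
    then have "xs!i \<in> T" "xs!i \<noteq> xs!Suc j"
      using assms(2-4) orient_in orient_orient_ne by auto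
    then have "{xs!i, xs!Suc j} \<in> E" using triangle_edge assms(2,3) by simp
    then have "Suc j = Suc i" using assms(1) Suc by (intro no_chord) auto
    then show False using Suc by simp
  qed
qed

lemma forward_edge_not_after:
  assumes "Suc j < length xs" "T \<in> Ts" "xs!j \<in> T" "xs!Suc j = s (xs!j)"
  shows "link (Suc (Suc j)) \<noteq> {xs!Suc j, s (xs!Suc j)}"
proof
  assume eq: "link (Suc (Suc j)) = {xs!Suc j, s (xs!Suc j)}"
  show False
  proof (cases "Suc (Suc j) = length xs")
    case True
    then have "rev xs ! 0 = xs!Suc j" "rev xs ! 1 = xs!j" by (simp_all add: rev_nth True[symmetric])
    moreover have "xs!j \<in> triangle_vertices" using assms(2,3) unfolding triangle_vertices_def by auto
    moreover have "link (Suc (Suc j)) = f" using True by (simp add: link_def True[symmetric])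
    ultimately have "twisted_start f (rev xs)" using eq assms(4) by (simp add: twisted_start_def)
    then show False using untwisted_end by simp
  next
    case False
    then have "Suc (Suc j) < length xs" using assms(1) by simp
    then have "xs!Suc j \<noteq> xs!Suc (Suc j)" using nth_eq_iff[of "Suc j" "Suc (Suc j)"] by simp
    moreover have "link (Suc (Suc j)) = {xs!Suc j, xs!Suc (Suc j)}"
      using link_Suc \<open>Suc (Suc j) < length xs\<close> by simp
    ultimately have "xs!Suc (Suc j) = s (xs!Suc j)" using eq by (auto simp: doubleton_eq_iff)
    then have "xs!Suc (Suc j) \<in> T" "xs!Suc (Suc j) \<noteq> xs!j"
      using assms(2-4) orient_in orient_orient_ne by auto
    then have "{xs!j, xs!Suc (Suc j)} \<in> E" using triangle_edge assms(2,3) by simp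
    then have "Suc (Suc j) = Suc j" using \<open>Suc (Suc j) < length xs\<close> by (intro no_chord) auto
    then show False by simp
  qed
qed

text \<open>Two consecutive vertices of the join in one triangle are joined by the forward edge
  of exactly one of them, so their colours differ in the boolean component.\<close>
lemma forward_flags_differ:
  assumes "Suc j < length xs" "T \<in> Ts" "xs!j \<in> T" "xs!Suc j \<in> T"
  shows "({xs!j, s (xs!j)} \<in> {link j, link (Suc j)})
    \<noteq> ({xs!Suc j, s (xs!Suc j)} \<in> {link (Suc j), link (Suc (Suc j))})"
proof -
  define v w where "v = xs!j" and "w = xs!Suc j"
  have vw: "link (Suc j) = {v, w}" "w \<noteq> v"
    using link_Suc nth_eq_iff assms(1) unfolding v_def w_def by auto
  consider "w = s v" | "v = s w" using triangle_other assms(2-4) vw(2) unfolding v_def w_def by blast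
  then show ?thesis
  proof cases
    case 1
    have "s w \<noteq> v" using orient_orient_ne assms(2,3) 1 unfolding v_def by simp
    then have "{w, s w} \<noteq> {v, w}" by (auto simp: doubleton_eq_iff)
    then show ?thesis
      using forward_edge_not_after[OF assms(1-3)] 1 vw unfolding v_def w_def by auto
  next
    case 2
    have "s v \<noteq> w" using orient_orient_ne assms(2,4) 2 unfolding w_def by simp
    then have "{v, s v} \<noteq> {v, w}" by (auto simp: doubleton_eq_iff)
    then show ?thesis
      using forward_edge_not_before[OF assms(1,2,4)] 2 vw unfolding v_def w_def
      by (auto simp: insert_commute)
  qed
qed

lemma colours_distinct:
  assumes "j < j'" "j' < length xs"
  shows "colour {link j, link (Suc j)} \<noteq> colour {link j', link (Suc j')}"
proof
  assume eq: "colour {link j, link (Suc j)} = colour {link j', link (Suc j')}"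
  have ne: "xs!j \<noteq> xs!j'" using nth_eq_iff assms by simp
  show False
  proof (cases "xs!j \<in> triangle_vertices")
    case False
    then show False using eq ne colour_link assms by (simp split: if_splits)
  next
    case True
    then have j': "xs!j' \<in> triangle_vertices" "triangle_of (xs!j') = triangle_of (xs!j)"
      and flags: "({xs!j, s (xs!j)} \<in> {link j, link (Suc j)})
        = ({xs!j', s (xs!j')} \<in> {link j', link (Suc j')})"
      using eq colour_link assms by (simp_all split: if_splits)
    define T where "T = triangle_of (xs!j)"
    have T: "T \<in> Ts" "xs!j \<in> T" "xs!j' \<in> T"
      using triangle_of_mem True j' unfolding T_def by metis+
    then have j'_eq: "j' = Suc j" using no_chord triangle_edge ne assms by blast
    then have "Suc j < length xs" using assms by simp
    from forward_flags_differ[OF this T(1,2)] T(3) flags show False unfolding j'_eq by blast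
  qed
qed

lemma rainbow_line_path: "distinct (map colour (path_edges line_path))"
proof -
  have "inj_on (\<lambda>j. colour {link j, link (Suc j)}) {0..<length xs}"
    by (rule linorder_inj_onI') (simp add: colours_distinct)
  then show ?thesis by (simp add: path_edges_line_path distinct_map comp_def)
qed

end

context oriented_triangles
begin

lemma untwisted_join_exists:
  assumes "e \<in> E" "f \<in> E" "e \<inter> f = {}"
  shows "\<exists>xs. untwisted_join V E Ts t s e f xs"
proof -
  have "e \<noteq> {}" "f \<noteq> {}" using edge_card assms(1,2) by fastforce+
  then obtain a b where "a \<in> e" "b \<in> f" by blast
  then obtain xs where "shortest_join E e f xs"
    using shortest_join_exists[OF connected] edge_subset assms(1,2) by blast
  then interpret triangle_join V E Ts t s e f xs
    using assms by unfold_locales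
  obtain ys where ys: "shortest_join E e f ys" "\<not> twisted_start e ys"
    using untwist_start by blast
  interpret rev_join: triangle_join V E Ts t s f e "rev ys"
    using assms ys(1) shortest_join_rev by unfold_locales auto
  obtain zs where zs: "shortest_join E f e zs" "\<not> twisted_start f zs" "\<not> twisted_start e (rev zs)"
    using rev_join.untwist_start ys(2) by auto
  have "untwisted_join V E Ts t s e f (rev zs)"
    using assms zs shortest_join_rev[OF zs(1)] by unfold_locales simp_all
  then show ?thesis by blast
qed

lemma rainbow_path_exists:
  assumes "e \<in> E" "f \<in> E"
  shows "\<exists>ys. is_path E (line_graph_edges E) ys e f \<and> distinct (map colour (path_edges ys))"
proof (cases "e \<inter> f = {}")
  case True
  then obtain xs where "untwisted_join V E Ts t s e f xs" using untwisted_join_exists assms by blast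
  then interpret untwisted_join V E Ts t s e f xs .
  show ?thesis using is_path_line_path rainbow_line_path by blast
next
  case False
  show ?thesis
  proof (cases "e = f")
    case True
    then have "is_path E (line_graph_edges E) [e] e f"
      using assms by (simp add: is_path_iff_graph_path graph_path_def)
    then show ?thesis by (auto simp: path_edges_def)
  next
    case ne: False
    then have "{e, f} \<in> line_graph_edges E" using assms False unfolding line_graph_edges_def by blast
    then have "is_path E (line_graph_edges E) [e, f] e f"
      using assms ne by (simp add: is_path_iff_graph_path graph_path_def nth_Cons')
    then show ?thesis by (auto simp: path_edges_def)
  qed
qed

end

lemma rainbow_connected_relabel:
  assumes "finite C" "\<forall>\<epsilon>\<in>F. col \<epsilon> \<in> C"
    and "\<And>u v. u \<in> W \<Longrightarrow> v \<in> W \<Longrightarrow> \<exists>xs. is_path W F xs u v \<and> distinct (map col (path_edges xs))"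
  shows "\<exists>c. (\<forall>\<epsilon>\<in>F. c \<epsilon> < card C) \<and> rainbow_connected W F c"
proof -
  obtain \<phi> where \<phi>: "bij_betw \<phi> C {0..<card C}" using ex_bij_betw_finite_nat[OF assms(1)] by blast
  have "\<forall>\<epsilon>\<in>F. (\<phi> \<circ> col) \<epsilon> < card C" using \<phi> assms(2) by (auto dest: bij_betwE)
  moreover have "rainbow_connected W F (\<phi> \<circ> col)"
    unfolding rainbow_connected_def rainbow_path_def
  proof (intro ballI)
    fix u v assume "u \<in> W" "v \<in> W"
    then obtain xs where xs: "is_path W F xs u v" "distinct (map col (path_edges xs))"
      using assms(3) by blast
    have "col ` set (path_edges xs) \<subseteq> C" using xs(1) assms(2) unfolding is_path_def by blast
    then have "inj_on \<phi> (set (map col (path_edges xs)))"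
      using \<phi> by (auto simp: bij_betw_def intro: inj_on_subset)
    then have "distinct (map (\<phi> \<circ> col) (path_edges xs))"
      using xs(2) by (simp add: distinct_map flip: map_map)
    then show "\<exists>xs. is_path W F xs u v \<and> distinct (map (\<phi> \<circ> col) (path_edges xs))"
      using xs(1) by blast
  qed
  ultimately show ?thesis by blast
qed

lemma rc_le: "\<forall>\<epsilon>\<in>E. c \<epsilon> < k \<Longrightarrow> rainbow_connected V E c \<Longrightarrow> rc V E \<le> k"
  unfolding rc_def by (rule Least_le) blast

lemma rc_attained:
  assumes "\<forall>\<epsilon>\<in>E. c \<epsilon> < k" "rainbow_connected V E c"
  obtains c' where "\<forall>\<epsilon>\<in>E. c' \<epsilon> < rc V E" "rainbow_connected V E c'"
  using LeastI_ex[of "\<lambda>k. \<exists>c. (\<forall>\<epsilon>\<in>E. c \<epsilon> < k) \<and> rainbow_connected V E c"] assms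
  unfolding rc_def by blast

lemma rainbow_colouring_line_graph:
  assumes "simple_graph V E" "connected_graph V E" "disjoint_triangles V E Ts t"
  shows "\<exists>c. (\<forall>\<epsilon>\<in>line_graph_edges E. c \<epsilon> < n2 V E - t) \<and> rainbow_connected E (line_graph_edges E) c"
proof -
  obtain s where "\<And>T v. T \<in> Ts \<Longrightarrow> v \<in> T \<Longrightarrow> s v \<in> T \<and> s v \<noteq> v \<and> s (s v) \<noteq> v"
    using triangle_orientation_exists[OF assms(3)] by blast
  then interpret oriented_triangles V E Ts t s
    using assms by unfold_locales blast+
  show ?thesis
    using rainbow_connected_relabel[OF finite_colours] colour_in_colours rainbow_path_exists
    unfolding card_colours by blast
qed

lemma rc_line_graph_le:
  assumes "simple_graph V E" "connected_graph V E" "disjoint_triangles V E Ts t"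
  shows "rc E (line_graph_edges E) \<le> n2 V E - t"
  using rainbow_colouring_line_graph[OF assms] rc_le by blast

section \<open>Sharpness\<close>

text \<open>The path \<open>0, 1, \<dots>, 3t\<close> with the chords \<open>{3i+1, 3i+3}\<close>: \<open>t\<close> disjoint triangles strung
  along a path, in which every vertex but \<open>0\<close> has degree at least 2.\<close>
definition chain_edges :: "nat \<Rightarrow> nat set set" where
  "chain_edges t = {{j, Suc j} | j. j < 3 * t} \<union> {{3 * i + 1, 3 * i + 3} | i. i < t}"

definition chain_triangles :: "nat \<Rightarrow> nat set set" where
  "chain_triangles t = {{3 * i + 1, 3 * i + 2, 3 * i + 3} | i. i < t}"

lemma chain_path_edge: "j < 3 * t \<Longrightarrow> {j, Suc j} \<in> chain_edges t"
  and chain_chord: "i < t \<Longrightarrow> {3 * i + 1, 3 * i + 3} \<in> chain_edges t"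
  unfolding chain_edges_def by blast+

lemma chain_simple: "simple_graph {0..3 * t} (chain_edges t)"
  unfolding simple_graph_def chain_edges_def by auto

lemma finite_chain_edges: "finite (chain_edges t)"
  using chain_simple[of t] by (meson PowI finite_Pow_iff finite_subset simple_graph_def subsetI)

lemma chain_path_upt:
  assumes "u \<le> v" "v \<le> 3 * t" shows "is_path {0..3 * t} (chain_edges t) [u..<Suc v] u v"
  unfolding is_path_iff_graph_path graph_path_def
proof (intro conjI allI impI)
  fix i assume "Suc i < length [u..<Suc v]"
  then have "[u..<Suc v] ! i = u + i" "[u..<Suc v] ! Suc i = Suc (u + i)" "u + i < 3 * t"
    using assms by (simp_all add: nth_upt del: upt_Suc)
  then show "{[u..<Suc v] ! i, [u..<Suc v] ! Suc i} \<in> chain_edges t" using chain_path_edge by simp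
qed (use assms in \<open>auto simp: hd_upt simp del: upt_Suc\<close>)

lemma chain_connected: "connected_graph {0..3 * t} (chain_edges t)"
  unfolding connected_graph_def
proof (intro conjI ballI)
  fix u v assume uv: "u \<in> {0..3 * t}" "v \<in> {0..3 * t}"
  show "\<exists>xs. is_path {0..3 * t} (chain_edges t) xs u v"
  proof (cases "u \<le> v")
    case True
    then show ?thesis using chain_path_upt uv by auto
  next
    case False
    then show ?thesis using is_path_rev[OF chain_path_upt[of v u]] uv by auto
  qed
qed simp

lemma chain_disjoint_triangles: "disjoint_triangles {0..3 * t} (chain_edges t) (chain_triangles t) t"
  unfolding disjoint_triangles_def
proof (intro conjI ballI impI)
  have "chain_triangles t = (\<lambda>i. {3 * i + 1, 3 * i + 2, 3 * i + 3}) ` {..<t}"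
    unfolding chain_triangles_def by auto
  moreover have "inj_on (\<lambda>i. {3 * i + 1, 3 * i + 2, 3 * i + 3}) {..<t}"
  proof (rule inj_onI)
    fix i j :: nat assume "{3 * i + 1, 3 * i + 2, 3 * i + 3} = {3 * j + 1, 3 * j + 2, 3 * j + 3}"
    then have "3 * i + 1 \<in> {3 * j + 1, 3 * j + 2, 3 * j + 3}" by blast
    then show "i = j" by auto
  qed
  ultimately show "card (chain_triangles t) = t" by (simp add: card_image)
next
  fix T assume "T \<in> chain_triangles t"
  then obtain i where i: "i < t" "T = {3 * i + 1, 3 * i + 2, 3 * i + 3}" unfolding chain_triangles_def by blast
  show "T \<subseteq> {0..3 * t}" using i by auto
  have "{3 * i + 1, 3 * i + 2} \<in> chain_edges t" "{3 * i + 2, 3 * i + 3} \<in> chain_edges t"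
    using chain_path_edge[of "3 * i + 1" t] chain_path_edge[of "3 * i + 2" t] i(1)
    by (simp_all add: eval_nat_numeral)
  then show "triangle (chain_edges t) T"
    using chain_chord[OF i(1)] i(2) unfolding triangle_def by (simp add: insert_commute)
next
  fix T T' assume "T \<in> chain_triangles t" "T' \<in> chain_triangles t" "T \<noteq> T'"
  then obtain i j where "T = {3 * i + 1, 3 * i + 2, 3 * i + 3}" "T' = {3 * j + 1, 3 * j + 2, 3 * j + 3}" "i \<noteq> j"
    unfolding chain_triangles_def by blast
  then show "T \<inter> T' = {}" by auto
qed

lemma chain_n2: assumes "0 < t" shows "n2 {0..3 * t} (chain_edges t) = 3 * t"
proof -
  have "{v \<in> {0..3 * t}. 2 \<le> degree (chain_edges t) v} = {1..3 * t}"
  proof (intro equalityI subsetI)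
    fix v assume v: "v \<in> {v \<in> {0..3 * t}. 2 \<le> degree (chain_edges t) v}"
    have "{g \<in> chain_edges t. 0 \<in> g} \<subseteq> {{0, 1}}" unfolding chain_edges_def by auto
    then have "degree (chain_edges t) 0 \<le> 1"
      unfolding degree_def by (metis card.empty card.insert card_mono empty_iff finite.intros One_nat_def)
    then show "v \<in> {1..3 * t}" using v by (cases "v = 0") auto
  next
    fix v assume v: "v \<in> {1..3 * t}"
    have "{v - 1, v} \<in> chain_edges t" using chain_path_edge[of "v - 1" t] v by auto
    moreover obtain g where "g \<in> chain_edges t" "v \<in> g" "g \<noteq> {v - 1, v}"
    proof (cases "v < 3 * t")
      case True
      then show ?thesis using that[of "{v, Suc v}"] chain_path_edge by (auto simp: doubleton_eq_iff)
    next
      case False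
      then have "{3 * (t - 1) + 1, 3 * (t - 1) + 3} \<in> chain_edges t" "3 * (t - 1) + 3 = v"
        using chain_chord[of "t - 1" t] v assms by simp_all
      then show ?thesis using that v assms by (auto simp: doubleton_eq_iff)
    qed
    ultimately have "2 \<le> degree (chain_edges t) v" using degree_ge_2I[OF finite_chain_edges] by blast
    then show "v \<in> {v \<in> {0..3 * t}. 2 \<le> degree (chain_edges t) v}" using v by simp
  qed
  then show ?thesis unfolding n2_def by simp
qed

text \<open>Edges meeting in a vertex differ in level by at most one, while the end edges
  \<open>{0, 1}\<close> and \<open>{3t - 1, 3t}\<close> have levels \<open>0\<close> and \<open>2t\<close>.\<close>
definition chain_level :: "nat set \<Rightarrow> nat" where
  "chain_level g = (2 * Min g + 2) div 3"

lemma chain_level_adjacent: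
  assumes "g \<in> chain_edges t" "h \<in> chain_edges t" "v \<in> g" "v \<in> h"
  shows "chain_level h \<le> chain_level g + 1"
proof -
  have level: "chain_level {j, Suc j} = (2 * j + 2) div 3" "chain_level {3 * i + 1, 3 * i + 3} = 2 * i + 1"
    for i j by (simp_all add: chain_level_def)
  consider (path) a where "g = {a, Suc a}" | (chord) i where "g = {3 * i + 1, 3 * i + 3}"
    using assms(1) unfolding chain_edges_def by blast
  then show ?thesis
  proof cases
    case path
    consider (path') b where "h = {b, Suc b}" | (chord') k where "h = {3 * k + 1, 3 * k + 3}"
      using assms(2) unfolding chain_edges_def by blast
    then show ?thesis
    proof cases
      case path'
      then have "b \<le> Suc a" using path assms by auto
      then show ?thesis unfolding path path' level by presburger
    next
      case chord'
      then have "3 * k \<le> a" using path assms by auto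
      then show ?thesis unfolding path chord' level by presburger
    qed
  next
    case chord
    consider (path') b where "h = {b, Suc b}" | (chord') k where "h = {3 * k + 1, 3 * k + 3}"
      using assms(2) unfolding chain_edges_def by blast
    then show ?thesis
    proof cases
      case path'
      then have "b \<le> 3 * i + 3" using chord assms by auto
      then show ?thesis unfolding chord path' level by presburger
    next
      case chord'
      then have "k = i" using chord assms by auto
      then show ?thesis unfolding chord chord' by simp
    qed
  qed
qed

lemma chain_level_along_path:
  assumes "graph_path (line_graph_edges (chain_edges t)) ys" "k < length ys"
  shows "chain_level (ys!k) \<le> chain_level (ys!0) + k"
  using assms(2)
proof (induction k)
  case (Suc k)
  then have "{ys!k, ys!Suc k} \<in> line_graph_edges (chain_edges t)"
    using assms(1) by (simp add: graph_path_def)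
  then have "ys!k \<in> chain_edges t" "ys!Suc k \<in> chain_edges t" "ys!k \<inter> ys!Suc k \<noteq> {}"
    unfolding line_graph_edges_def by (auto simp: doubleton_eq_iff)
  then have "chain_level (ys!Suc k) \<le> chain_level (ys!k) + 1"
    using chain_level_adjacent by blast
  then show ?case using Suc by simp
qed simp

lemma chain_rainbow_colours_ge:
  assumes "0 < t" "\<forall>\<epsilon>\<in>line_graph_edges (chain_edges t). c \<epsilon> < k"
    and "rainbow_connected (chain_edges t) (line_graph_edges (chain_edges t)) c"
  shows "2 * t \<le> k"
proof -
  define u w where "u = {0::nat, 1}" and "w = {3 * t - 1, 3 * t}"
  have w: "w = {3 * t - 1, Suc (3 * t - 1)}" using assms(1) unfolding w_def by simp
  have "u \<in> chain_edges t" "w \<in> chain_edges t"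
    using chain_path_edge[of 0 t] chain_path_edge[of "3 * t - 1" t] assms(1) unfolding u_def w by simp_all
  then obtain ys where ys: "is_path (chain_edges t) (line_graph_edges (chain_edges t)) ys u w"
    "distinct (map c (path_edges ys))"
    using assms(3) unfolding rainbow_connected_def rainbow_path_def by blast
  then have path: "graph_path (line_graph_edges (chain_edges t)) ys" "ys!0 = u" "ys!(length ys - 1) = w"
    unfolding is_path_iff_graph_path by (auto simp: graph_path_def hd_conv_nth last_conv_nth)
  have "chain_level w \<le> chain_level u + (length ys - 1)"
    using chain_level_along_path[OF path(1), of "length ys - 1"] path
    by (simp add: graph_path_def)
  moreover have "chain_level u = 0" "chain_level w = 2 * t"
    using assms(1) unfolding u_def w chain_level_def by simp_all
  moreover have "set (map c (path_edges ys)) \<subseteq> {..<k}"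
    using ys(1) assms(2) unfolding is_path_def by auto
  then have "length (path_edges ys) \<le> k"
    using distinct_card[OF ys(2)] by (metis card_lessThan card_mono finite_lessThan length_map)
  ultimately show ?thesis by (simp add: length_path_edges)
qed

lemma rc_line_graph_chain:
  assumes "0 < t"
  shows "rc (chain_edges t) (line_graph_edges (chain_edges t)) = n2 {0..3 * t} (chain_edges t) - t"
proof -
  obtain c where c: "\<forall>\<epsilon>\<in>line_graph_edges (chain_edges t). c \<epsilon> < n2 {0..3 * t} (chain_edges t) - t"
      "rainbow_connected (chain_edges t) (line_graph_edges (chain_edges t)) c"
    using rainbow_colouring_line_graph[OF chain_simple chain_connected chain_disjoint_triangles] by blast
  then obtain c' where "\<forall>\<epsilon>\<in>line_graph_edges (chain_edges t). c' \<epsilon> < rc (chain_edges t) (line_graph_edges (chain_edges t))"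
      "rainbow_connected (chain_edges t) (line_graph_edges (chain_edges t)) c'"
    by (rule rc_attained)
  then have "2 * t \<le> rc (chain_edges t) (line_graph_edges (chain_edges t))"
    using chain_rainbow_colours_ge[OF assms] by blast
  moreover have "rc (chain_edges t) (line_graph_edges (chain_edges t)) \<le> n2 {0..3 * t} (chain_edges t) - t"
    using rc_le c by blast
  ultimately show ?thesis using chain_n2[OF assms] by simp
qed

theorem corollary3p2:
  shows "(\<forall>(V :: 'a set) E Ts t'. simple_graph V E \<and> connected_graph V E
            \<and> disjoint_triangles V E Ts t'
          \<longrightarrow> rc E (line_graph_edges E) \<le> n2 V E - t')
       \<and> (\<forall>t' :: nat. t' > 0 \<longrightarrow>
          (\<exists>(V :: nat set) E Ts. simple_graph V E \<and> connected_graph V E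
            \<and> disjoint_triangles V E Ts t'
            \<and> rc E (line_graph_edges E) = n2 V E - t'))"
proof (intro conjI allI impI)
  fix V :: "'a set" and E Ts t'
  assume "simple_graph V E \<and> connected_graph V E \<and> disjoint_triangles V E Ts t'"
  then show "rc E (line_graph_edges E) \<le> n2 V E - t'" using rc_line_graph_le by blast
next
  fix t' :: nat assume "t' > 0"
  then show "\<exists>(V :: nat set) E Ts. simple_graph V E \<and> connected_graph V E
      \<and> disjoint_triangles V E Ts t' \<and> rc E (line_graph_edges E) = n2 V E - t'"
    using rc_line_graph_chain chain_simple chain_connected chain_disjoint_triangles by blast
qed

end
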